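(* Let $\ell\geq 1$ be an integer. There is a constant $\sigma_\ell$ depending only on $\ell$ such that for every integer $s\geq 0$ and every $\mathbf{a}=(a_0,\ldots,a_\ell)\in\mathbb{R}^{\ell+1}$ the matrix $A_{s,\mathbf{a}}\in M_{\ell+1}(\mathbb{R})$ with entries \[ (A_{s,\mathbf{a}})_{ij}=\big((i-1)(\ell+1)+j\big)^{\ell-1}\quad (1\leq i\leq \ell,\ 1\leq j\leq \ell+1),\qquad (A_{s,\mathbf{a}})_{\ell+1,j}=(j-1)^s a_{j-1}\quad (1\leq j\leq \ell+1) \] satisfies \[ \det(A_{s,\mathbf{a}})=\sigma_\ell\sum_{j=0}^{\ell}(-1)^j\binom{\ell}{j} j^s a_j . \]
   Context: The convention $0^0=1$ is used. *)

theory Defs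
  imports "Jordan_Normal_Form.Determinant"
begin

text \<open>The (l+1)x(l+1) matrix A_{s,a}, indices shifted to 0-based:
  row i < l (paper row i+1), column j (paper column j+1):
  entry (i*(l+1) + j + 1)^(l-1); last row i = l: j^s * a j (with 0^0 = 1).\<close>
definition A_mat :: "nat \<Rightarrow> nat \<Rightarrow> (nat \<Rightarrow> real) \<Rightarrow> real mat" where
  "A_mat l s a = mat (l+1) (l+1)
     (\<lambda>(i,j). if i < l then real ((i*(l+1) + j + 1) ^ (l-1)) else real j ^ s * a j)"

end

(* The vector w = ((-1)^j (l choose j))_j is orthogonal to every row of A but the last: each such
   row lists the values of a polynomial of degree l - 1 at l + 1 consecutive integers, and w takes
   their l-th finite difference. By Cramer's rule, replacing the last column of A by A w multiplies
   det A by w_l = (-1)^l; the new column vanishes except for its last entry, so expanding along it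
   gives (-1)^l det A = (sum of the paper) * det A', where the minor A' involves neither s nor a. *)

theory Submission
  imports Defs
begin

lemma alternating_binomial_sum_power_eq_0:
  fixes c :: "'a :: comm_ring_1"
  assumes "k < n"
  shows "(\<Sum>j\<le>n. (-1)^j * of_nat (n choose j) * (c + of_nat j)^k) = 0"
  using assms
proof (induction k arbitrary: n c)
  case 0
  then show ?case using choose_alternating_sum[of n, where 'a='a] by (simp add: atLeast0AtMost)
next
  case (Suc k)
  then obtain m where n: "n = Suc m" and km: "k < m" by (cases n) auto
  \<comment> \<open>Split (c + j)^(k+1) = c (c + j)^k + j (c + j)^k; as j (n choose j) = n (m choose j - 1),
     the second part is the same kind of sum for m and c + 1.\<close>
  have "(\<Sum>j\<le>n. (-1)^j * of_nat (n choose j) * (c + of_nat j)^Suc k)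
      = c * (\<Sum>j\<le>n. (-1)^j * of_nat (n choose j) * (c + of_nat j)^k)
        + (\<Sum>j\<le>n. (-1)^j * of_nat (n choose j) * of_nat j * (c + of_nat j)^k)"
    by (simp add: sum_distrib_left sum.distrib[symmetric] algebra_simps)
  also have "(\<Sum>j\<le>n. (-1)^j * of_nat (n choose j) * of_nat j * (c + of_nat j)^k)
      = (\<Sum>i\<le>m. (-1)^Suc i * of_nat (Suc m choose Suc i) * of_nat (Suc i) * (c + of_nat (Suc i))^k)"
    unfolding n by (subst sum.atMost_Suc_shift) simp
  also have "\<dots> = - of_nat n * (\<Sum>i\<le>m. (-1)^i * of_nat (m choose i) * ((c + 1) + of_nat i)^k)"
    unfolding sum_distrib_left n
  proof (rule sum.cong[OF refl])
    fix i
    have "of_nat (Suc m choose Suc i) * of_nat (Suc i) = (of_nat (Suc m) * of_nat (m choose i) :: 'a)"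
      using arg_cong[OF Suc_times_binomial[of i m], of "of_nat :: nat \<Rightarrow> 'a"]
      by (simp only: of_nat_mult mult.commute)
    moreover have "c + of_nat (Suc i) = (c + 1) + of_nat i"
      by (simp add: algebra_simps)
    ultimately show "(-1)^Suc i * of_nat (Suc m choose Suc i) * of_nat (Suc i) * (c + of_nat (Suc i))^k
      = - of_nat (Suc m) * ((-1)^i * of_nat (m choose i) * ((c + 1) + of_nat i)^k)"
      by (metis (no_types, lifting) mult.assoc mult.left_commute mult_minus_left power_Suc mult_1 mult_minus1)
  qed
  finally show ?case using Suc.IH[of n c] Suc.IH[OF km] Suc.prems by simp
qed

lemma det_by_last_row_of_column_relation:
  fixes A :: "'a :: comm_ring_1 mat"
  assumes A: "A \<in> carrier_mat (Suc n) (Suc n)" and x: "x \<in> carrier_vec (Suc n)"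
    and upper_rows: "\<And>i. i < n \<Longrightarrow> row A i \<bullet> x = 0"
  shows "x $ n * det A = (row A n \<bullet> x) * det (mat_delete A n n)"
proof -
  let ?B = "replace_col A (A *\<^sub>v x) n"
  have B: "?B \<in> carrier_mat (Suc n) (Suc n)"
    using A by (simp add: replace_col_def)
  have last_col: "?B $$ (i, n) = (if i = n then row A n \<bullet> x else 0)" if "i < Suc n" for i
    using that A upper_rows by (auto simp: replace_col_def)
  have "x $ n * det A = det ?B"
    using cramer_lemma_mat[OF A x] by simp
  also have "\<dots> = (\<Sum>i<Suc n. ?B $$ (i, n) * cofactor ?B i n)"
    by (rule laplace_expansion_column[OF B]) simp
  also have "\<dots> = (row A n \<bullet> x) * cofactor ?B n n"
    by (simp add: last_col)
  also have "cofactor ?B n n = det (mat_delete A n n)"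
    using A by (auto simp: cofactor_def replace_col_def mat_delete_def intro!: arg_cong[of _ _ det] eq_matI)
  finally show ?thesis .
qed

definition alternating_binomial_vec :: "nat \<Rightarrow> 'a :: comm_ring_1 vec" where
  "alternating_binomial_vec n = vec (Suc n) (\<lambda>j. (-1)^j * of_nat (n choose j))"

lemma alternating_binomial_vec_carrier: "alternating_binomial_vec n \<in> carrier_vec (Suc n)"
  by (simp add: alternating_binomial_vec_def)

lemma row_A_mat_upper_alternating_binomial:
  assumes "1 \<le> l" and "i < l"
  shows "row (A_mat l s a) i \<bullet> alternating_binomial_vec l = 0"
proof -
  have "row (A_mat l s a) i \<bullet> alternating_binomial_vec l
      = (\<Sum>j\<le>l. (-1)^j * real (l choose j) * (real (i * (l + 1) + 1) + real j)^(l - 1))"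
    unfolding scalar_prod_def
    by (rule sum.cong) (use assms in \<open>auto simp: A_mat_def alternating_binomial_vec_def mult_ac add_ac\<close>)
  also have "\<dots> = 0"
    using alternating_binomial_sum_power_eq_0[of "l - 1" l] assms(1) by simp
  finally show ?thesis .
qed

lemma row_A_mat_last_alternating_binomial:
  "row (A_mat l s a) l \<bullet> alternating_binomial_vec l
     = (\<Sum>j=0..l. (-1)^j * real (l choose j) * real j ^ s * a j)"
  unfolding scalar_prod_def
  by (rule sum.cong) (auto simp: A_mat_def alternating_binomial_vec_def)

lemma mat_delete_A_mat_last:
  "mat_delete (A_mat l s a) l l = mat_delete (A_mat l 0 (\<lambda>_. 0)) l l"
  by (auto simp: A_mat_def mat_delete_def intro!: eq_matI)

theorem proposition1:
  fixes l :: nat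
  assumes "l \<ge> 1"
  shows "\<exists>\<sigma>::real. \<forall>(s::nat) (a::nat \<Rightarrow> real).
           det (A_mat l s a) = \<sigma> * (\<Sum>j=0..l. (-1)^j * real (l choose j) * real j ^ s * a j)"
proof (intro exI allI)
  fix s a
  let ?S = "\<Sum>j=0..l. (-1)^j * real (l choose j) * real j ^ s * a j"
  let ?D = "det (mat_delete (A_mat l 0 (\<lambda>_. 0)) l l)"
  have carrier: "A_mat l s a \<in> carrier_mat (Suc l) (Suc l)"
    by (simp add: A_mat_def)
  have "alternating_binomial_vec l $ l * det (A_mat l s a)
      = ?S * det (mat_delete (A_mat l s a) l l)"
    using det_by_last_row_of_column_relation[OF carrier alternating_binomial_vec_carrier
        row_A_mat_upper_alternating_binomial[OF assms]]
    by (simp add: row_A_mat_last_alternating_binomial)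
  then have eq: "(-1)^l * det (A_mat l s a) = ?S * ?D"
    by (simp add: alternating_binomial_vec_def mat_delete_A_mat_last[of l s a])
  have "det (A_mat l s a) = (-1)^l * ((-1)^l * det (A_mat l s a))"
    by (simp add: mult.assoc[symmetric] flip: power_add)
  also have "\<dots> = ((-1)^l * ?D) * ?S"
    by (simp only: eq mult_ac)
  finally show "det (A_mat l s a) = ((-1)^l * ?D) * ?S" .
qed

end
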